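(* Let $\nu_1,\lambda_1,\lambda_2\ge0$ and measurable $\beta_1\colon\mathcal X\to(0,\infty)$, $\beta_2\colon\mathcal X\times\mathcal Y_1\to(0,\infty)$ satisfy $\Sigma_2(y_1,y_2)\le1$ and $\Sigma_1(y_1)\le1$ for all $(y_1,y_2)$. Fix an $(M_1,M_2,d_1,d_2,\epsilon_1,\epsilon_2)$ code and define $$F=(1+\nu_1)\log\frac1{\beta_1(X)}-\lambda_1d_1-\lambda_2d_2-\nu_1\log M_1 .$$ Then for all $\gamma_1,\gamma_2>0$ both $$\epsilon_1\ge\mathbb P[F_1\ge\log M_1+\gamma_1]-e^{-\gamma_1}$$ and $$\epsilon_2\ge\mathbb P\big[\{F\ge\log M_2+\nu_1\gamma_1+\gamma_2\}\cup\{F_1\ge\log M_1+\gamma_1\}\big]-e^{-\gamma_1}-e^{-\gamma_2}$$ hold.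
   Context: $X$ has law $P_X$ on $\mathcal X$; $\mathsf d_1\colon\mathcal X\times\mathcal Y_1\to[0,\infty)$, $\mathsf d_2\colon\mathcal X\times\mathcal Y_2\to[0,\infty)$ measurable, all $\sigma$-algebras containing singletons. $\Sigma_2(y_1,y_2)=\mathbb E\big[\exp(-\frac{\lambda_1}{1+\nu_1}\mathsf d_1(X,y_1)-\lambda_2\mathsf d_2(X,y_2))/(\beta_1(X)\beta_2(X|y_1)^{\nu_1/(1+\nu_1)})\big]$, $\Sigma_1(y_1)=\mathbb E\big[\exp(-\frac{\lambda_1}{1+\nu_1}\mathsf d_1(X,y_1))\beta_2(X|y_1)^{1/(1+\nu_1)}/\beta_1(X)\big]$, expectations over $X\sim P_X$. An $(M_1,M_2,d_1,d_2,\epsilon_1,\epsilon_2)$ code: positive integers $M_1\le M_2$, possibly randomized encoders $P_{W_1|X}$ into $\{1,\dots,M_1\}$, $P_{W_2|XW_1}$ into $\{1,\dots,\lfloor M_2/M_1\rfloor\}$, decoders $P_{Y_1|W_1}$, $P_{Y_2|W_1W_2}$, with $\mathcal A_1=\{\mathsf d_1(X,Y_1)\le d_1\}$, $\mathcal A_2=\mathcal A_1\cap\{\mathsf d_2(X,Y_2)\le d_2\}$, $\mathbb P[\mathcal A_1^c]\le\epsilon_1$, $\mathbb P[\mathcal A_2^c]\le\epsilon_2$. $F_1=\log\frac{\beta_2(X|Y_1)^{1/(1+\nu_1)}}{\beta_1(X)}-\frac{\lambda_1}{1+\nu_1}d_1$, where $Y_1$ is the code's first-stage output. Logarithms natural.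 *)

theory Defs
  imports "HOL-Probability.Probability"
begin

definition Sigma2 :: "'x measure \<Rightarrow> ('x \<Rightarrow> 'y1 \<Rightarrow> real) \<Rightarrow> ('x \<Rightarrow> 'y2 \<Rightarrow> real)
    \<Rightarrow> ('x \<Rightarrow> real) \<Rightarrow> ('x \<Rightarrow> 'y1 \<Rightarrow> real) \<Rightarrow> real \<Rightarrow> real \<Rightarrow> real \<Rightarrow> 'y1 \<Rightarrow> 'y2 \<Rightarrow> ennreal" where
  "Sigma2 PX dist1 dist2 beta1 beta2 nu1 lam1 lam2 y1 y2 =
     (\<integral>\<^sup>+ x. ennreal (exp (- (lam1 / (1 + nu1)) * dist1 x y1 - lam2 * dist2 x y2)
         / (beta1 x * beta2 x y1 powr (nu1 / (1 + nu1)))) \<partial>PX)"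

definition Sigma1 :: "'x measure \<Rightarrow> ('x \<Rightarrow> 'y1 \<Rightarrow> real)
    \<Rightarrow> ('x \<Rightarrow> real) \<Rightarrow> ('x \<Rightarrow> 'y1 \<Rightarrow> real) \<Rightarrow> real \<Rightarrow> real \<Rightarrow> 'y1 \<Rightarrow> ennreal" where
  "Sigma1 PX dist1 beta1 beta2 nu1 lam1 y1 =
     (\<integral>\<^sup>+ x. ennreal (exp (- (lam1 / (1 + nu1)) * dist1 x y1)
         * beta2 x y1 powr (1 / (1 + nu1)) / beta1 x) \<partial>PX)"

definition code_law :: "'x measure \<Rightarrow> 'y1 measure \<Rightarrow> 'y2 measure \<Rightarrow> ('x \<Rightarrow> nat measure)
    \<Rightarrow> ('x \<times> nat \<Rightarrow> nat measure) \<Rightarrow> (nat \<Rightarrow> 'y1 measure) \<Rightarrow> (nat \<times> nat \<Rightarrow> 'y2 measure)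
    \<Rightarrow> ('x \<times> 'y1 \<times> 'y2) measure" where
  "code_law PX MY1 MY2 E1 E2 G1 G2 =
     PX \<bind> (\<lambda>x. E1 x \<bind> (\<lambda>w1. E2 (x, w1) \<bind> (\<lambda>w2. G1 w1 \<bind> (\<lambda>y1. G2 (w1, w2) \<bind>
       (\<lambda>y2. return (PX \<Otimes>\<^sub>M MY1 \<Otimes>\<^sub>M MY2) (x, y1, y2))))))"

definition is_code :: "'x measure \<Rightarrow> 'y1 measure \<Rightarrow> 'y2 measure \<Rightarrow> ('x \<Rightarrow> 'y1 \<Rightarrow> real)
    \<Rightarrow> ('x \<Rightarrow> 'y2 \<Rightarrow> real) \<Rightarrow> nat \<Rightarrow> nat \<Rightarrow> real \<Rightarrow> real \<Rightarrow> real \<Rightarrow> real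
    \<Rightarrow> ('x \<Rightarrow> nat measure) \<Rightarrow> ('x \<times> nat \<Rightarrow> nat measure) \<Rightarrow> (nat \<Rightarrow> 'y1 measure)
    \<Rightarrow> (nat \<times> nat \<Rightarrow> 'y2 measure) \<Rightarrow> bool" where
  "is_code PX MY1 MY2 dist1 dist2 M1 M2 d1 d2 eps1 eps2 E1 E2 G1 G2 \<longleftrightarrow>
     0 < M1 \<and> M1 \<le> M2 \<and>
     E1 \<in> PX \<rightarrow>\<^sub>M prob_algebra (count_space {1..M1}) \<and>
     E2 \<in> PX \<Otimes>\<^sub>M count_space {1..M1} \<rightarrow>\<^sub>M prob_algebra (count_space {1..M2 div M1}) \<and>
     G1 \<in> count_space {1..M1} \<rightarrow>\<^sub>M prob_algebra MY1 \<and>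
     G2 \<in> count_space {1..M1} \<Otimes>\<^sub>M count_space {1..M2 div M1} \<rightarrow>\<^sub>M prob_algebra MY2 \<and>
     (let L = code_law PX MY1 MY2 E1 E2 G1 G2 in
        measure L {\<omega> \<in> space L. \<not> dist1 (fst \<omega>) (fst (snd \<omega>)) \<le> d1} \<le> eps1 \<and>
        measure L {\<omega> \<in> space L. \<not> (dist1 (fst \<omega>) (fst (snd \<omega>)) \<le> d1
                                     \<and> dist2 (fst \<omega>) (snd (snd \<omega>)) \<le> d2)} \<le> eps2)"

end

theory Submission
  imports Defs
begin

text \<open>For every fixed reconstruction the tilted densities integrating to Sigma1 and Sigma2 have
  P_X-integral at most 1. The reconstructions depend on X only through the messages, so under the
  joint law of a code the expected densities are at most the number of messages: M1 for the first
  stage and M1 * (M2 div M1) \<le> M2 for both stages together. By Markov's inequality the densities exceed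
  M1 e^gamma1, resp. M2 e^gamma2, with probability at most e^-gamma1, resp. e^-gamma2. Where the
  distortion constraints hold, the logarithm of the first density is at least F1, and that of the
  second at least F + nu1 (log M1 - F1); so the events of the theorem are covered by the distortion
  failures and the two Markov events, and the union bound gives the claim.\<close>

lemma prob_algebra_kernelD:
  assumes "K \<in> M \<rightarrow>\<^sub>M prob_algebra N" "x \<in> space M"
  shows "prob_space (K x)" and "sets (K x) = sets N"
  using measurable_space[OF assms] by (simp_all add: space_prob_algebra)

lemma nn_integral_bind_prob_algebra:
  assumes "sets M = sets M'" and "f \<in> borel_measurable N" and "K \<in> M' \<rightarrow>\<^sub>M prob_algebra N"
  shows "(\<integral>\<^sup>+\<omega>. f \<omega> \<partial>(M \<bind> K)) = (\<integral>\<^sup>+x. \<integral>\<^sup>+\<omega>. f \<omega> \<partial>K x \<partial>M)"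
  using assms by (intro nn_integral_bind measurable_prob_algebraD) (simp_all cong: measurable_cong_sets)

lemma nn_integral_le_sum_count_space:
  assumes "prob_space M" and "sets M = sets (count_space A)" and "finite A"
  shows "(\<integral>\<^sup>+w. g w \<partial>M) \<le> (\<Sum>v\<in>A. g v)"
proof -
  have "(\<integral>\<^sup>+w. g w \<partial>M) = (\<integral>\<^sup>+w. (\<Sum>v\<in>A. g v * indicator {v} w) \<partial>M)"
    using sets_eq_imp_space_eq[OF assms(2)] assms(3)
    by (intro nn_integral_cong) (simp add: indicator_def sum.If_cases)
  also have "\<dots> = (\<Sum>v\<in>A. g v * emeasure M {v})"
  proof (subst nn_integral_sum)
    show "(\<lambda>w. g v * indicator {v} w) \<in> borel_measurable M" if "v \<in> A" for v
    proof -
      have "{v} \<in> sets M" using that assms(2) by simp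
      then show ?thesis by simp
    qed
  qed (use assms(2) in \<open>auto intro!: sum.cong nn_integral_cmult_indicator\<close>)
  also have "\<dots> \<le> (\<Sum>v\<in>A. g v)"
    using prob_space.emeasure_le_1[OF assms(1)] by (intro sum_mono) (metis mult.right_neutral mult_left_mono zero_le)
  finally show ?thesis .
qed

lemma borel_measurable_nn_integral_fst_cong_sets:
  assumes "sigma_finite_measure A" and "sets A = sets N" and "f \<in> borel_measurable (M \<Otimes>\<^sub>M N)"
  shows "(\<lambda>x. \<integral>\<^sup>+y. f (x, y) \<partial>A) \<in> borel_measurable M"
proof -
  have "f \<in> borel_measurable (M \<Otimes>\<^sub>M A)"
    using assms(3) by (simp add: measurable_cong_sets[OF sets_pair_measure_cong[OF refl assms(2)] refl])
  then show ?thesis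
    by (rule sigma_finite_measure.borel_measurable_nn_integral_fst[OF assms(1)])
qed

lemma nn_integral_Fubini_cong_sets:
  assumes "sigma_finite_measure M" and "sigma_finite_measure A" and "sets A = sets N"
    and "f \<in> borel_measurable (M \<Otimes>\<^sub>M N)"
  shows "(\<integral>\<^sup>+x. \<integral>\<^sup>+y. f (x, y) \<partial>A \<partial>M) = (\<integral>\<^sup>+y. \<integral>\<^sup>+x. f (x, y) \<partial>M \<partial>A)"
proof -
  interpret pair_sigma_finite M A
    using assms(1,2) by (rule pair_sigma_finite.intro)
  have "f \<in> borel_measurable (M \<Otimes>\<^sub>M A)"
    using assms(4) by (simp add: measurable_cong_sets[OF sets_pair_measure_cong[OF refl assms(3)] refl])
  then show ?thesis
    by (rule Fubini[symmetric])
qed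

lemma nn_integral_mixture_le_1:
  assumes "sigma_finite_measure M" and "prob_space A" and "sets A = sets N"
    and "h \<in> borel_measurable (M \<Otimes>\<^sub>M N)"
    and "\<And>y. y \<in> space N \<Longrightarrow> (\<integral>\<^sup>+x. h (x, y) \<partial>M) \<le> 1"
  shows "(\<integral>\<^sup>+x. \<integral>\<^sup>+y. h (x, y) \<partial>A \<partial>M) \<le> 1"
proof -
  have "(\<integral>\<^sup>+x. \<integral>\<^sup>+y. h (x, y) \<partial>A \<partial>M) = (\<integral>\<^sup>+y. \<integral>\<^sup>+x. h (x, y) \<partial>M \<partial>A)"
    by (rule nn_integral_Fubini_cong_sets[OF assms(1) prob_space_imp_sigma_finite[OF assms(2)] assms(3,4)])
  also have "\<dots> \<le> (\<integral>\<^sup>+y. 1 \<partial>A)"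
    using assms(5) sets_eq_imp_space_eq[OF assms(3)] by (intro nn_integral_mono) simp
  finally show ?thesis
    using prob_space.emeasure_space_1[OF assms(2)] by simp
qed

lemma nn_integral_mixture2_le_1:
  assumes M: "sigma_finite_measure M"
    and A: "prob_space A" "sets A = sets N1" and B: "prob_space B" "sets B = sets N2"
    and f: "f \<in> borel_measurable (M \<Otimes>\<^sub>M N1 \<Otimes>\<^sub>M N2)"
    and f_le_1: "\<And>y1 y2. y1 \<in> space N1 \<Longrightarrow> y2 \<in> space N2 \<Longrightarrow> (\<integral>\<^sup>+x. f (x, y1, y2) \<partial>M) \<le> 1"
  shows "(\<lambda>x. \<integral>\<^sup>+y1. \<integral>\<^sup>+y2. f (x, y1, y2) \<partial>B \<partial>A) \<in> borel_measurable M"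
    and "(\<integral>\<^sup>+x. \<integral>\<^sup>+y1. \<integral>\<^sup>+y2. f (x, y1, y2) \<partial>B \<partial>A \<partial>M) \<le> 1"
proof -
  note [measurable] = f
  have inner: "(\<lambda>(x, y1). \<integral>\<^sup>+y2. f (x, y1, y2) \<partial>B) \<in> borel_measurable (M \<Otimes>\<^sub>M N1)"
    using borel_measurable_nn_integral_fst_cong_sets[OF prob_space_imp_sigma_finite[OF B(1)] B(2),
        of "\<lambda>(z, y2). f (fst z, snd z, y2)" "M \<Otimes>\<^sub>M N1"]
    by (simp add: case_prod_beta')
  show "(\<lambda>x. \<integral>\<^sup>+y1. \<integral>\<^sup>+y2. f (x, y1, y2) \<partial>B \<partial>A) \<in> borel_measurable M"
    using borel_measurable_nn_integral_fst_cong_sets[OF prob_space_imp_sigma_finite[OF A(1)] A(2) inner]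
    by simp
  show "(\<integral>\<^sup>+x. \<integral>\<^sup>+y1. \<integral>\<^sup>+y2. f (x, y1, y2) \<partial>B \<partial>A \<partial>M) \<le> 1"
  proof (rule nn_integral_mixture_le_1[OF M A inner, simplified])
    fix y1 assume y1[measurable]: "y1 \<in> space N1"
    show "(\<integral>\<^sup>+x. \<integral>\<^sup>+y2. f (x, y1, y2) \<partial>B \<partial>M) \<le> 1"
      using f_le_1[OF y1]
      by (intro nn_integral_mixture_le_1[OF M B, where h="\<lambda>(x, y2). f (x, y1, y2)", simplified]) auto
  qed
qed

lemma measure_ge_le_nn_integral_div:
  assumes "f \<in> borel_measurable M" and "(\<integral>\<^sup>+x. ennreal (f x) \<partial>M) \<le> ennreal B"
    and "0 \<le> B" and "0 < c"
  shows "measure M {x \<in> space M. c \<le> f x} \<le> B / c"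
proof -
  have "emeasure M {x \<in> space M. c \<le> f x} \<le> (\<integral>\<^sup>+x. ennreal (f x) * ennreal (1 / c) \<partial>M)"
  proof (subst nn_integral_indicator[symmetric], use assms(1) in measurable, intro nn_integral_mono)
    fix x
    have "1 \<le> f x * (1 / c)" if "c \<le> f x"
      using that \<open>0 < c\<close> by simp
    then show "indicator {x \<in> space M. c \<le> f x} x \<le> ennreal (f x) * ennreal (1 / c)"
      using \<open>0 < c\<close> by (auto simp: indicator_def simp flip: ennreal_mult'')
  qed
  also have "\<dots> = (\<integral>\<^sup>+x. ennreal (f x) \<partial>M) * ennreal (1 / c)"
    using assms(1) by (intro nn_integral_multc) simp
  also have "\<dots> \<le> ennreal B * ennreal (1 / c)"
    using assms(2) by (rule mult_right_mono) simp
  also have "\<dots> = ennreal (B / c)"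
    using \<open>0 < c\<close> by (subst ennreal_mult''[symmetric]) simp_all
  finally show ?thesis
    using assms(3,4) by (simp add: measure_def enn2real_leI)
qed

lemma nn_integral_bind_decoders:
  fixes PX :: "'x measure" and MY1 :: "'y1 measure" and MY2 :: "'y2 measure"
  assumes G1[measurable]: "G1 \<in> count_space A1 \<rightarrow>\<^sub>M prob_algebra MY1"
    and G2[measurable]: "G2 \<in> count_space A1 \<Otimes>\<^sub>M count_space A2 \<rightarrow>\<^sub>M prob_algebra MY2"
    and f[measurable]: "f \<in> borel_measurable (PX \<Otimes>\<^sub>M MY1 \<Otimes>\<^sub>M MY2)"
    and x[measurable]: "x \<in> space PX" and "w1 \<in> A1" and "w2 \<in> A2"
  shows "(\<integral>\<^sup>+\<omega>. f \<omega> \<partial>(G1 w1 \<bind> (\<lambda>y1. G2 (w1, w2) \<bind> (\<lambda>y2. return (PX \<Otimes>\<^sub>M MY1 \<Otimes>\<^sub>M MY2) (x, y1, y2)))))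
      = (\<integral>\<^sup>+y1. \<integral>\<^sup>+y2. f (x, y1, y2) \<partial>G2 (w1, w2) \<partial>G1 w1)"
proof -
  have [measurable]: "w1 \<in> space (count_space A1)" "w2 \<in> space (count_space A2)"
    using \<open>w1 \<in> A1\<close> \<open>w2 \<in> A2\<close> by simp_all
  have sets_G1: "sets (G1 w1) = sets MY1" and sets_G2: "sets (G2 (w1, w2)) = sets MY2"
    using prob_algebra_kernelD(2)[OF G1] prob_algebra_kernelD(2)[OF G2] \<open>w1 \<in> A1\<close> \<open>w2 \<in> A2\<close>
    by (simp_all add: space_pair_measure)
  have "(\<integral>\<^sup>+\<omega>. f \<omega> \<partial>(G2 (w1, w2) \<bind> (\<lambda>y2. return (PX \<Otimes>\<^sub>M MY1 \<Otimes>\<^sub>M MY2) (x, y1, y2))))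
      = (\<integral>\<^sup>+y2. f (x, y1, y2) \<partial>G2 (w1, w2))"
    if y1[measurable]: "y1 \<in> space MY1" for y1
    using x y1 sets_eq_imp_space_eq[OF sets_G2]
    by (subst nn_integral_bind_prob_algebra[OF sets_G2 f])
      (auto intro!: nn_integral_cong nn_integral_return simp: space_pair_measure)
  then show ?thesis
    using sets_eq_imp_space_eq[OF sets_G1]
    by (subst nn_integral_bind_prob_algebra[OF sets_G1 f]) (auto intro!: nn_integral_cong)
qed

lemma nn_integral_code_law:
  fixes PX :: "'x measure" and MY1 :: "'y1 measure" and MY2 :: "'y2 measure"
  assumes E1[measurable]: "E1 \<in> PX \<rightarrow>\<^sub>M prob_algebra (count_space A1)"
    and E2[measurable]: "E2 \<in> PX \<Otimes>\<^sub>M count_space A1 \<rightarrow>\<^sub>M prob_algebra (count_space A2)"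
    and G1[measurable]: "G1 \<in> count_space A1 \<rightarrow>\<^sub>M prob_algebra MY1"
    and G2[measurable]: "G2 \<in> count_space A1 \<Otimes>\<^sub>M count_space A2 \<rightarrow>\<^sub>M prob_algebra MY2"
    and f[measurable]: "f \<in> borel_measurable (PX \<Otimes>\<^sub>M MY1 \<Otimes>\<^sub>M MY2)"
  shows "(\<integral>\<^sup>+\<omega>. f \<omega> \<partial>code_law PX MY1 MY2 E1 E2 G1 G2) =
    (\<integral>\<^sup>+x. \<integral>\<^sup>+w1. \<integral>\<^sup>+w2. \<integral>\<^sup>+y1. \<integral>\<^sup>+y2. f (x, y1, y2) \<partial>G2 (w1, w2) \<partial>G1 w1 \<partial>E2 (x, w1) \<partial>E1 x \<partial>PX)"
proof -
  let ?N = "PX \<Otimes>\<^sub>M MY1 \<Otimes>\<^sub>M MY2"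
  have encoders: "(\<integral>\<^sup>+\<omega>. f \<omega> \<partial>(E1 x \<bind> (\<lambda>w1. E2 (x, w1) \<bind> (\<lambda>w2. G1 w1 \<bind>
        (\<lambda>y1. G2 (w1, w2) \<bind> (\<lambda>y2. return ?N (x, y1, y2)))))))
      = (\<integral>\<^sup>+w1. \<integral>\<^sup>+w2. \<integral>\<^sup>+y1. \<integral>\<^sup>+y2. f (x, y1, y2) \<partial>G2 (w1, w2) \<partial>G1 w1 \<partial>E2 (x, w1) \<partial>E1 x)"
    if x[measurable]: "x \<in> space PX" for x
  proof -
    have sets_E1: "sets (E1 x) = sets (count_space A1)"
      using prob_algebra_kernelD(2)[OF E1 x] .
    have sets_E2: "sets (E2 (x, w1)) = sets (count_space A2)" if "w1 \<in> A1" for w1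
      using prob_algebra_kernelD(2)[OF E2] x that by (simp add: space_pair_measure)
    have "(\<integral>\<^sup>+\<omega>. f \<omega> \<partial>(E2 (x, w1) \<bind> (\<lambda>w2. G1 w1 \<bind>
        (\<lambda>y1. G2 (w1, w2) \<bind> (\<lambda>y2. return ?N (x, y1, y2))))))
      = (\<integral>\<^sup>+w2. \<integral>\<^sup>+y1. \<integral>\<^sup>+y2. f (x, y1, y2) \<partial>G2 (w1, w2) \<partial>G1 w1 \<partial>E2 (x, w1))"
      if w1: "w1 \<in> A1" for w1
    proof -
      have [measurable]: "w1 \<in> space (count_space A1)" using w1 by simp
      have "(\<lambda>w2. G1 w1 \<bind> (\<lambda>y1. G2 (w1, w2) \<bind> (\<lambda>y2. return ?N (x, y1, y2))))
          \<in> count_space A2 \<rightarrow>\<^sub>M prob_algebra ?N"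
        using measurable_space[OF G1, of w1] w1
        by (intro measurable_bind_prob_space2[OF measurable_const]) measurable
      then show ?thesis
        using nn_integral_bind_decoders[OF G1 G2 f x w1] sets_eq_imp_space_eq[OF sets_E2[OF w1]]
        by (subst nn_integral_bind_prob_algebra[OF sets_E2[OF w1] f]) (auto intro!: nn_integral_cong)
    qed
    moreover have "(\<lambda>w1. E2 (x, w1) \<bind> (\<lambda>w2. G1 w1 \<bind>
        (\<lambda>y1. G2 (w1, w2) \<bind> (\<lambda>y2. return ?N (x, y1, y2))))) \<in> count_space A1 \<rightarrow>\<^sub>M prob_algebra ?N"
      by measurable
    ultimately show ?thesis
      using sets_eq_imp_space_eq[OF sets_E1]
      by (subst nn_integral_bind_prob_algebra[OF sets_E1 f]) (auto intro!: nn_integral_cong)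
  qed
  show ?thesis
    unfolding code_law_def using encoders
    by (subst nn_integral_bind_prob_algebra[OF refl f]) (auto intro!: nn_integral_cong)
qed

lemma nn_integral_code_law_le_card:
  fixes PX :: "'x measure" and MY1 :: "'y1 measure" and MY2 :: "'y2 measure"
  assumes PX: "prob_space PX"
    and E1[measurable]: "E1 \<in> PX \<rightarrow>\<^sub>M prob_algebra (count_space A1)"
    and E2[measurable]: "E2 \<in> PX \<Otimes>\<^sub>M count_space A1 \<rightarrow>\<^sub>M prob_algebra (count_space A2)"
    and G1[measurable]: "G1 \<in> count_space A1 \<rightarrow>\<^sub>M prob_algebra MY1"
    and G2[measurable]: "G2 \<in> count_space A1 \<Otimes>\<^sub>M count_space A2 \<rightarrow>\<^sub>M prob_algebra MY2"
    and "finite A1" "finite A2"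
    and f[measurable]: "f \<in> borel_measurable (PX \<Otimes>\<^sub>M MY1 \<Otimes>\<^sub>M MY2)"
    and f_le_1: "\<And>y1 y2. y1 \<in> space MY1 \<Longrightarrow> y2 \<in> space MY2 \<Longrightarrow> (\<integral>\<^sup>+x. f (x, y1, y2) \<partial>PX) \<le> 1"
  shows "(\<integral>\<^sup>+\<omega>. f \<omega> \<partial>code_law PX MY1 MY2 E1 E2 G1 G2) \<le> of_nat (card A1 * card A2)"
proof -
  define \<Phi> where "\<Phi> x w1 w2 = (\<integral>\<^sup>+y1. \<integral>\<^sup>+y2. f (x, y1, y2) \<partial>G2 (w1, w2) \<partial>G1 w1)" for x w1 w2
  have PX_sf: "sigma_finite_measure PX"
    using PX by (rule prob_space_imp_sigma_finite)
  have \<Phi>_props: "(\<lambda>x. \<Phi> x w1 w2) \<in> borel_measurable PX \<and> (\<integral>\<^sup>+x. \<Phi> x w1 w2 \<partial>PX) \<le> 1"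
    if "w1 \<in> A1" "w2 \<in> A2" for w1 w2
  proof -
    have G1w: "prob_space (G1 w1)" "sets (G1 w1) = sets MY1"
      using prob_algebra_kernelD[OF G1] that by simp_all
    have G2w: "prob_space (G2 (w1, w2))" "sets (G2 (w1, w2)) = sets MY2"
      using prob_algebra_kernelD[OF G2] that by (simp_all add: space_pair_measure)
    show ?thesis
      unfolding \<Phi>_def using nn_integral_mixture2_le_1[OF PX_sf G1w G2w f f_le_1] ..
  qed
  have "(\<integral>\<^sup>+\<omega>. f \<omega> \<partial>code_law PX MY1 MY2 E1 E2 G1 G2) =
      (\<integral>\<^sup>+x. \<integral>\<^sup>+w1. \<integral>\<^sup>+w2. \<Phi> x w1 w2 \<partial>E2 (x, w1) \<partial>E1 x \<partial>PX)"
    unfolding \<Phi>_def by (rule nn_integral_code_law[OF E1 E2 G1 G2 f])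
  also have "\<dots> \<le> (\<integral>\<^sup>+x. (\<Sum>w1\<in>A1. \<Sum>w2\<in>A2. \<Phi> x w1 w2) \<partial>PX)"
  proof (rule nn_integral_mono)
    fix x assume x: "x \<in> space PX"
    have "(\<integral>\<^sup>+w1. \<integral>\<^sup>+w2. \<Phi> x w1 w2 \<partial>E2 (x, w1) \<partial>E1 x) \<le> (\<integral>\<^sup>+w1. (\<Sum>w2\<in>A2. \<Phi> x w1 w2) \<partial>E1 x)"
    proof (rule nn_integral_mono)
      fix w1 assume "w1 \<in> space (E1 x)"
      then have "(x, w1) \<in> space (PX \<Otimes>\<^sub>M count_space A1)"
        using x sets_eq_imp_space_eq[OF prob_algebra_kernelD(2)[OF E1 x]] by (simp add: space_pair_measure)
      then show "(\<integral>\<^sup>+w2. \<Phi> x w1 w2 \<partial>E2 (x, w1)) \<le> (\<Sum>w2\<in>A2. \<Phi> x w1 w2)"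
        using prob_algebra_kernelD[OF E2] \<open>finite A2\<close> by (intro nn_integral_le_sum_count_space)
    qed
    also have "\<dots> \<le> (\<Sum>w1\<in>A1. \<Sum>w2\<in>A2. \<Phi> x w1 w2)"
      using prob_algebra_kernelD[OF E1 x] \<open>finite A1\<close> by (rule nn_integral_le_sum_count_space)
    finally show "(\<integral>\<^sup>+w1. \<integral>\<^sup>+w2. \<Phi> x w1 w2 \<partial>E2 (x, w1) \<partial>E1 x) \<le> (\<Sum>w1\<in>A1. \<Sum>w2\<in>A2. \<Phi> x w1 w2)" .
  qed
  also have "\<dots> = (\<Sum>w1\<in>A1. \<Sum>w2\<in>A2. \<integral>\<^sup>+x. \<Phi> x w1 w2 \<partial>PX)"
    using \<Phi>_props by (subst nn_integral_sum) (auto intro!: sum.cong nn_integral_sum borel_measurable_sum)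
  also have "\<dots> \<le> (\<Sum>w1\<in>A1. \<Sum>w2\<in>A2. 1)"
    using \<Phi>_props by (intro sum_mono) simp
  finally show ?thesis
    by simp
qed

lemma nn_integral_code_law_fst_le_card:
  fixes PX :: "'x measure" and MY1 :: "'y1 measure" and MY2 :: "'y2 measure"
  assumes PX: "prob_space PX"
    and E1[measurable]: "E1 \<in> PX \<rightarrow>\<^sub>M prob_algebra (count_space A1)"
    and E2[measurable]: "E2 \<in> PX \<Otimes>\<^sub>M count_space A1 \<rightarrow>\<^sub>M prob_algebra (count_space A2)"
    and G1[measurable]: "G1 \<in> count_space A1 \<rightarrow>\<^sub>M prob_algebra MY1"
    and G2[measurable]: "G2 \<in> count_space A1 \<Otimes>\<^sub>M count_space A2 \<rightarrow>\<^sub>M prob_algebra MY2"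
    and "finite A1"
    and g[measurable]: "g \<in> borel_measurable (PX \<Otimes>\<^sub>M MY1)"
    and g_le_1: "\<And>y1. y1 \<in> space MY1 \<Longrightarrow> (\<integral>\<^sup>+x. g (x, y1) \<partial>PX) \<le> 1"
  shows "(\<integral>\<^sup>+\<omega>. g (fst \<omega>, fst (snd \<omega>)) \<partial>code_law PX MY1 MY2 E1 E2 G1 G2) \<le> of_nat (card A1)"
proof -
  define \<Psi> where "\<Psi> x w1 = (\<integral>\<^sup>+y1. g (x, y1) \<partial>G1 w1)" for x w1
  have \<Psi>_props: "(\<lambda>x. \<Psi> x w1) \<in> borel_measurable PX \<and> (\<integral>\<^sup>+x. \<Psi> x w1 \<partial>PX) \<le> 1"
    if "w1 \<in> A1" for w1
  proof -
    have G1w: "prob_space (G1 w1)" "sets (G1 w1) = sets MY1"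
      using prob_algebra_kernelD[OF G1] that by simp_all
    show ?thesis
      unfolding \<Psi>_def using g_le_1
      by (intro conjI borel_measurable_nn_integral_fst_cong_sets[OF prob_space_imp_sigma_finite[OF G1w(1)] G1w(2) g]
          nn_integral_mixture_le_1[OF prob_space_imp_sigma_finite[OF PX] G1w g])
  qed
  have "(\<integral>\<^sup>+\<omega>. g (fst \<omega>, fst (snd \<omega>)) \<partial>code_law PX MY1 MY2 E1 E2 G1 G2) =
      (\<integral>\<^sup>+x. \<integral>\<^sup>+w1. \<integral>\<^sup>+w2. \<integral>\<^sup>+y1. \<integral>\<^sup>+y2. g (x, y1) \<partial>G2 (w1, w2) \<partial>G1 w1 \<partial>E2 (x, w1) \<partial>E1 x \<partial>PX)"
    using nn_integral_code_law[OF E1 E2 G1 G2, of "\<lambda>\<omega>. g (fst \<omega>, fst (snd \<omega>))"] by simp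
  also have "\<dots> = (\<integral>\<^sup>+x. \<integral>\<^sup>+w1. \<Psi> x w1 \<partial>E1 x \<partial>PX)"
  proof (intro nn_integral_cong)
    fix x w1 assume x: "x \<in> space PX" and "w1 \<in> space (E1 x)"
    then have "(x, w1) \<in> space (PX \<Otimes>\<^sub>M count_space A1)"
      using sets_eq_imp_space_eq[OF prob_algebra_kernelD(2)[OF E1 x]] by (simp add: space_pair_measure)
    moreover have "prob_space (G2 (w1, w2))" if "w2 \<in> space (E2 (x, w1))" for w2
      using calculation that sets_eq_imp_space_eq[OF prob_algebra_kernelD(2)[OF E2 calculation]]
        prob_algebra_kernelD(1)[OF G2] by (simp add: space_pair_measure)
    ultimately show "(\<integral>\<^sup>+w2. \<integral>\<^sup>+y1. \<integral>\<^sup>+y2. g (x, y1) \<partial>G2 (w1, w2) \<partial>G1 w1 \<partial>E2 (x, w1)) = \<Psi> x w1"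
      unfolding \<Psi>_def using prob_algebra_kernelD(1)[OF E2]
      by (simp add: prob_space.emeasure_space_1 cong: nn_integral_cong)
  qed
  also have "\<dots> \<le> (\<integral>\<^sup>+x. (\<Sum>w1\<in>A1. \<Psi> x w1) \<partial>PX)"
    using prob_algebra_kernelD[OF E1] \<open>finite A1\<close> by (intro nn_integral_mono nn_integral_le_sum_count_space)
  also have "\<dots> = (\<Sum>w1\<in>A1. \<integral>\<^sup>+x. \<Psi> x w1 \<partial>PX)"
    using \<Psi>_props by (intro nn_integral_sum) simp
  also have "\<dots> \<le> (\<Sum>w1\<in>A1. 1)"
    using \<Psi>_props by (intro sum_mono) simp
  finally show ?thesis
    by simp
qed

locale two_stage_code =
  fixes PX :: "'x measure" and MY1 :: "'y1 measure" and MY2 :: "'y2 measure"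
    and dist1 :: "'x \<Rightarrow> 'y1 \<Rightarrow> real" and dist2 :: "'x \<Rightarrow> 'y2 \<Rightarrow> real"
    and beta1 :: "'x \<Rightarrow> real" and beta2 :: "'x \<Rightarrow> 'y1 \<Rightarrow> real"
    and nu1 lam1 lam2 :: real and M1 M2 :: nat
    and E1 :: "'x \<Rightarrow> nat measure" and E2 :: "'x \<times> nat \<Rightarrow> nat measure"
    and G1 :: "nat \<Rightarrow> 'y1 measure" and G2 :: "nat \<times> nat \<Rightarrow> 'y2 measure"
  assumes prob_space_PX: "prob_space PX"
    and dist1_meas: "(\<lambda>(x, y). dist1 x y) \<in> borel_measurable (PX \<Otimes>\<^sub>M MY1)"
    and dist2_meas: "(\<lambda>(x, y). dist2 x y) \<in> borel_measurable (PX \<Otimes>\<^sub>M MY2)"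
    and nu1_nonneg: "0 \<le> nu1" and lam1_nonneg: "0 \<le> lam1" and lam2_nonneg: "0 \<le> lam2"
    and beta1_meas: "beta1 \<in> borel_measurable PX"
    and beta1_pos: "\<And>x. x \<in> space PX \<Longrightarrow> 0 < beta1 x"
    and beta2_meas: "(\<lambda>(x, y). beta2 x y) \<in> borel_measurable (PX \<Otimes>\<^sub>M MY1)"
    and beta2_pos: "\<And>x y. x \<in> space PX \<Longrightarrow> y \<in> space MY1 \<Longrightarrow> 0 < beta2 x y"
    and Sigma2_le: "\<And>y1 y2. y1 \<in> space MY1 \<Longrightarrow> y2 \<in> space MY2 \<Longrightarrow>
                      Sigma2 PX dist1 dist2 beta1 beta2 nu1 lam1 lam2 y1 y2 \<le> 1"
    and Sigma1_le: "\<And>y1. y1 \<in> space MY1 \<Longrightarrow> Sigma1 PX dist1 beta1 beta2 nu1 lam1 y1 \<le> 1"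
    and M1_pos: "0 < M1" and M1_le_M2: "M1 \<le> M2"
    and E1_kernel: "E1 \<in> PX \<rightarrow>\<^sub>M prob_algebra (count_space {1..M1})"
    and E2_kernel: "E2 \<in> PX \<Otimes>\<^sub>M count_space {1..M1} \<rightarrow>\<^sub>M prob_algebra (count_space {1..M2 div M1})"
    and G1_kernel: "G1 \<in> count_space {1..M1} \<rightarrow>\<^sub>M prob_algebra MY1"
    and G2_kernel: "G2 \<in> count_space {1..M1} \<Otimes>\<^sub>M count_space {1..M2 div M1} \<rightarrow>\<^sub>M prob_algebra MY2"
begin

abbreviation law :: "('x \<times> 'y1 \<times> 'y2) measure" where
  "law \<equiv> code_law PX MY1 MY2 E1 E2 G1 G2"

lemmas [measurable] = E1_kernel E2_kernel G1_kernel G2_kernel beta1_meas beta2_meas dist1_meas dist2_meas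

lemma prob_space_law: "prob_space law"
  and sets_law: "sets law = sets (PX \<Otimes>\<^sub>M MY1 \<Otimes>\<^sub>M MY2)"
proof -
  have "PX \<in> space (prob_algebra PX)"
    using prob_space_PX by (simp add: space_prob_algebra)
  moreover have "(\<lambda>x. E1 x \<bind> (\<lambda>w1. E2 (x, w1) \<bind> (\<lambda>w2. G1 w1 \<bind> (\<lambda>y1. G2 (w1, w2) \<bind>
      (\<lambda>y2. return (PX \<Otimes>\<^sub>M MY1 \<Otimes>\<^sub>M MY2) (x, y1, y2))))))
      \<in> PX \<rightarrow>\<^sub>M prob_algebra (PX \<Otimes>\<^sub>M MY1 \<Otimes>\<^sub>M MY2)"
    by measurable
  ultimately show "prob_space law" "sets law = sets (PX \<Otimes>\<^sub>M MY1 \<Otimes>\<^sub>M MY2)"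
    unfolding code_law_def by (rule prob_space_bind', rule sets_bind')
qed

lemma space_law: "space law = space (PX \<Otimes>\<^sub>M MY1 \<Otimes>\<^sub>M MY2)"
  using sets_law by (rule sets_eq_imp_space_eq)

lemma borel_measurable_law: "borel_measurable law = borel_measurable (PX \<Otimes>\<^sub>M MY1 \<Otimes>\<^sub>M MY2)"
  using sets_law by (rule measurable_cong_sets) simp

definition Sigma1_integrand :: "'x \<Rightarrow> 'y1 \<Rightarrow> real" where
  "Sigma1_integrand x y1 =
     exp (- (lam1 / (1 + nu1)) * dist1 x y1) * beta2 x y1 powr (1 / (1 + nu1)) / beta1 x"

definition Sigma2_integrand :: "'x \<Rightarrow> 'y1 \<Rightarrow> 'y2 \<Rightarrow> real" where
  "Sigma2_integrand x y1 y2 =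
     exp (- (lam1 / (1 + nu1)) * dist1 x y1 - lam2 * dist2 x y2) / (beta1 x * beta2 x y1 powr (nu1 / (1 + nu1)))"

definition F1 :: "real \<Rightarrow> 'x \<Rightarrow> 'y1 \<Rightarrow> real" where
  "F1 d1 = (\<lambda>x y1. ln (beta2 x y1 powr (1 / (1 + nu1)) / beta1 x) - lam1 / (1 + nu1) * d1)"

definition F :: "real \<Rightarrow> real \<Rightarrow> 'x \<Rightarrow> real" where
  "F d1 d2 = (\<lambda>x. (1 + nu1) * ln (1 / beta1 x) - lam1 * d1 - lam2 * d2 - nu1 * ln (real M1))"

lemma measurable_Sigma1_integrand[measurable]:
  "(\<lambda>\<omega>. Sigma1_integrand (fst \<omega>) (fst (snd \<omega>))) \<in> borel_measurable (PX \<Otimes>\<^sub>M MY1 \<Otimes>\<^sub>M MY2)"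
  unfolding Sigma1_integrand_def by measurable

lemma measurable_Sigma2_integrand[measurable]:
  "(\<lambda>\<omega>. Sigma2_integrand (fst \<omega>) (fst (snd \<omega>)) (snd (snd \<omega>))) \<in> borel_measurable (PX \<Otimes>\<^sub>M MY1 \<Otimes>\<^sub>M MY2)"
  unfolding Sigma2_integrand_def by measurable

lemma measurable_F1[measurable]:
  "(\<lambda>\<omega>. F1 d1 (fst \<omega>) (fst (snd \<omega>))) \<in> borel_measurable (PX \<Otimes>\<^sub>M MY1 \<Otimes>\<^sub>M MY2)"
  unfolding F1_def by measurable

lemma measurable_F[measurable]: "(\<lambda>\<omega>. F d1 d2 (fst \<omega>)) \<in> borel_measurable (PX \<Otimes>\<^sub>M MY1 \<Otimes>\<^sub>M MY2)"
  unfolding F_def by measurable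

lemma Sigma1_integrand_eq:
  assumes "x \<in> space PX" and "y1 \<in> space MY1"
  shows "Sigma1_integrand x y1 = exp (F1 d1 x y1 + lam1 / (1 + nu1) * (d1 - dist1 x y1))"
proof -
  have "F1 d1 x y1 + lam1 / (1 + nu1) * (d1 - dist1 x y1)
      = - (lam1 / (1 + nu1)) * dist1 x y1 + ln (beta2 x y1 powr (1 / (1 + nu1)) / beta1 x)"
    by (simp add: F1_def right_diff_distrib)
  then have "exp (F1 d1 x y1 + lam1 / (1 + nu1) * (d1 - dist1 x y1))
      = exp (- (lam1 / (1 + nu1)) * dist1 x y1) * exp (ln (beta2 x y1 powr (1 / (1 + nu1)) / beta1 x))"
    by (simp only: exp_add)
  also have "\<dots> = Sigma1_integrand x y1"
    using beta1_pos[OF assms(1)] beta2_pos[OF assms] by (simp add: Sigma1_integrand_def)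
  finally show ?thesis ..
qed

lemma Sigma2_integrand_eq:
  assumes "x \<in> space PX" and "y1 \<in> space MY1"
  shows "Sigma2_integrand x y1 y2 = exp (F d1 d2 x + nu1 * (ln (real M1) - F1 d1 x y1)
     + lam1 / (1 + nu1) * (d1 - dist1 x y1) + lam2 * (d2 - dist2 x y2))"
proof -
  define q where "q = lam1 / (1 + nu1)"
  define a where "a = ln (beta1 x)"
  define c where "c = ln (beta2 x y1) / (1 + nu1)"
  have F1_eq: "F1 d1 x y1 = c - a - q * d1"
    using beta1_pos[OF assms(1)] beta2_pos[OF assms] by (simp add: F1_def a_def c_def q_def ln_div ln_powr)
  have F_eq: "F d1 d2 x = (1 + nu1) * (- a) - (1 + nu1) * q * d1 - lam2 * d2 - nu1 * ln (real M1)"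
    using beta1_pos[OF assms(1)] nu1_nonneg by (simp add: F_def a_def q_def ln_div)
  have "F d1 d2 x + nu1 * (ln (real M1) - F1 d1 x y1) + q * (d1 - dist1 x y1) + lam2 * (d2 - dist2 x y2)
      = - q * dist1 x y1 - lam2 * dist2 x y2 - (a + nu1 * c)"
    unfolding F_eq F1_eq by (simp add: algebra_simps)
  also have "a + nu1 * c = ln (beta1 x * beta2 x y1 powr (nu1 / (1 + nu1)))"
    using beta1_pos[OF assms(1)] beta2_pos[OF assms] by (simp add: a_def c_def ln_mult ln_powr)
  finally show ?thesis
    using beta1_pos[OF assms(1)] beta2_pos[OF assms] by (simp add: Sigma2_integrand_def exp_diff q_def)
qed

lemma nn_integral_Sigma1_integrand_le:
  "(\<integral>\<^sup>+\<omega>. ennreal (Sigma1_integrand (fst \<omega>) (fst (snd \<omega>))) \<partial>law) \<le> ennreal (real M1)"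
proof -
  define g where "g z = ennreal (Sigma1_integrand (fst z) (snd z))" for z
  have "(\<integral>\<^sup>+\<omega>. g (fst \<omega>, fst (snd \<omega>)) \<partial>law) \<le> of_nat (card {1..M1})"
  proof (rule nn_integral_code_law_fst_le_card[OF prob_space_PX E1_kernel E2_kernel G1_kernel G2_kernel])
    show "g \<in> borel_measurable (PX \<Otimes>\<^sub>M MY1)"
      unfolding g_def Sigma1_integrand_def by measurable
    show "(\<integral>\<^sup>+x. g (x, y1) \<partial>PX) \<le> 1" if "y1 \<in> space MY1" for y1
      using Sigma1_le[OF that] by (simp add: g_def Sigma1_def Sigma1_integrand_def)
  qed simp
  then show ?thesis
    by (simp add: g_def ennreal_of_nat_eq_real_of_nat)
qed

lemma nn_integral_Sigma2_integrand_le: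
  "(\<integral>\<^sup>+\<omega>. ennreal (Sigma2_integrand (fst \<omega>) (fst (snd \<omega>)) (snd (snd \<omega>))) \<partial>law) \<le> ennreal (real M2)"
proof -
  have "(\<integral>\<^sup>+\<omega>. ennreal (Sigma2_integrand (fst \<omega>) (fst (snd \<omega>)) (snd (snd \<omega>))) \<partial>law)
      \<le> of_nat (card {1..M1} * card {1..M2 div M1})"
  proof (rule nn_integral_code_law_le_card[OF prob_space_PX E1_kernel E2_kernel G1_kernel G2_kernel])
    show "(\<integral>\<^sup>+x. ennreal (Sigma2_integrand (fst (x, y1, y2)) (fst (snd (x, y1, y2))) (snd (snd (x, y1, y2)))) \<partial>PX) \<le> 1"
      if "y1 \<in> space MY1" "y2 \<in> space MY2" for y1 y2
      using Sigma2_le[OF that] by (simp add: Sigma2_def Sigma2_integrand_def)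
  qed simp_all
  also have "\<dots> \<le> of_nat M2"
    by (rule of_nat_mono) (simp add: times_div_less_eq_dividend)
  finally show ?thesis
    by (simp add: ennreal_of_nat_eq_real_of_nat)
qed

lemma measure_Sigma1_integrand_ge:
  "measure law {\<omega> \<in> space law. real M1 * exp \<gamma> \<le> Sigma1_integrand (fst \<omega>) (fst (snd \<omega>))} \<le> exp (- \<gamma>)"
proof -
  have "measure law {\<omega> \<in> space law. real M1 * exp \<gamma> \<le> Sigma1_integrand (fst \<omega>) (fst (snd \<omega>))}
      \<le> real M1 / (real M1 * exp \<gamma>)"
    using M1_pos by (intro measure_ge_le_nn_integral_div nn_integral_Sigma1_integrand_le)
      (simp_all add: borel_measurable_law)
  then show ?thesis
    using M1_pos by (simp add: exp_minus field_simps)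
qed

lemma measure_Sigma2_integrand_ge:
  "measure law {\<omega> \<in> space law. real M2 * exp \<gamma> \<le> Sigma2_integrand (fst \<omega>) (fst (snd \<omega>)) (snd (snd \<omega>))}
     \<le> exp (- \<gamma>)"
proof -
  have "0 < M2"
    using M1_pos M1_le_M2 by simp
  then have "measure law {\<omega> \<in> space law. real M2 * exp \<gamma> \<le> Sigma2_integrand (fst \<omega>) (fst (snd \<omega>)) (snd (snd \<omega>))}
      \<le> real M2 / (real M2 * exp \<gamma>)"
    by (intro measure_ge_le_nn_integral_div nn_integral_Sigma2_integrand_le)
      (simp_all add: borel_measurable_law)
  then show ?thesis
    using \<open>0 < M2\<close> by (simp add: exp_minus field_simps)
qed

lemma Sigma1_integrand_ge:
  assumes "x \<in> space PX" and "y1 \<in> space MY1" and "dist1 x y1 \<le> d1"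
    and "ln (real M1) + \<gamma> \<le> F1 d1 x y1"
  shows "real M1 * exp \<gamma> \<le> Sigma1_integrand x y1"
proof -
  have "0 \<le> lam1 / (1 + nu1) * (d1 - dist1 x y1)"
    using lam1_nonneg nu1_nonneg assms(3) by simp
  then have "ln (real M1) + \<gamma> \<le> F1 d1 x y1 + lam1 / (1 + nu1) * (d1 - dist1 x y1)"
    using assms(4) by linarith
  then have "exp (ln (real M1) + \<gamma>) \<le> Sigma1_integrand x y1"
    by (simp add: Sigma1_integrand_eq[OF assms(1,2), of d1])
  then show ?thesis
    using M1_pos by (simp add: exp_add)
qed

lemma Sigma2_integrand_ge:
  assumes "x \<in> space PX" and "y1 \<in> space MY1" and "dist1 x y1 \<le> d1" and "dist2 x y2 \<le> d2"
    and "ln (real M2) + nu1 * \<gamma>1 + \<gamma>2 \<le> F d1 d2 x" and "F1 d1 x y1 < ln (real M1) + \<gamma>1"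
  shows "real M2 * exp \<gamma>2 \<le> Sigma2_integrand x y1 y2"
proof -
  have "0 \<le> lam1 / (1 + nu1) * (d1 - dist1 x y1)" and "0 \<le> lam2 * (d2 - dist2 x y2)"
    using lam1_nonneg lam2_nonneg nu1_nonneg assms(3,4) by simp_all
  moreover have "- nu1 * \<gamma>1 \<le> nu1 * (ln (real M1) - F1 d1 x y1)"
    using mult_left_mono[of "- \<gamma>1" "ln (real M1) - F1 d1 x y1" nu1] nu1_nonneg assms(6) by simp
  ultimately have "ln (real M2) + \<gamma>2 \<le> F d1 d2 x + nu1 * (ln (real M1) - F1 d1 x y1)
      + lam1 / (1 + nu1) * (d1 - dist1 x y1) + lam2 * (d2 - dist2 x y2)"
    using assms(5) by linarith
  then have "exp (ln (real M2) + \<gamma>2) \<le> Sigma2_integrand x y1 y2"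
    by (simp only: Sigma2_integrand_eq[OF assms(1,2), of y2 d1 d2] exp_le_cancel_iff)
  then show ?thesis
    using M1_pos M1_le_M2 by (simp add: exp_add)
qed

lemma space_lawD:
  assumes "\<omega> \<in> space law"
  shows "fst \<omega> \<in> space PX" and "fst (snd \<omega>) \<in> space MY1" and "snd (snd \<omega>) \<in> space MY2"
  using assms by (auto simp: space_law space_pair_measure)

lemma first_stage_error_bound:
  assumes "measure law {\<omega> \<in> space law. \<not> dist1 (fst \<omega>) (fst (snd \<omega>)) \<le> d1} \<le> eps1"
  shows "measure law {\<omega> \<in> space law. ln (real M1) + \<gamma>1 \<le> F1 d1 (fst \<omega>) (fst (snd \<omega>))}
           \<le> eps1 + exp (- \<gamma>1)"
proof -
  define D1 where "D1 = {\<omega> \<in> space law. \<not> dist1 (fst \<omega>) (fst (snd \<omega>)) \<le> d1}"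
  define T1 where "T1 = {\<omega> \<in> space law. real M1 * exp \<gamma>1 \<le> Sigma1_integrand (fst \<omega>) (fst (snd \<omega>))}"
  have events: "D1 \<in> sets law" "T1 \<in> sets law"
    unfolding D1_def T1_def sets_law space_law by measurable
  have "measure law {\<omega> \<in> space law. ln (real M1) + \<gamma>1 \<le> F1 d1 (fst \<omega>) (fst (snd \<omega>))}
      \<le> measure law (D1 \<union> T1)"
    using events prob_space_law
    by (intro finite_measure.finite_measure_mono prob_space.finite_measure)
      (auto simp: D1_def T1_def intro!: Sigma1_integrand_ge dest: space_lawD)
  also have "\<dots> \<le> eps1 + exp (- \<gamma>1)"
    using measure_Un_le[OF events] assms measure_Sigma1_integrand_ge[of \<gamma>1]
    unfolding D1_def T1_def by linarith
  finally show ?thesis .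
qed

lemma second_stage_error_bound:
  assumes "measure law {\<omega> \<in> space law. \<not> (dist1 (fst \<omega>) (fst (snd \<omega>)) \<le> d1
                                         \<and> dist2 (fst \<omega>) (snd (snd \<omega>)) \<le> d2)} \<le> eps2"
  shows "measure law {\<omega> \<in> space law. ln (real M2) + nu1 * \<gamma>1 + \<gamma>2 \<le> F d1 d2 (fst \<omega>)
                                       \<or> ln (real M1) + \<gamma>1 \<le> F1 d1 (fst \<omega>) (fst (snd \<omega>))}
           \<le> eps2 + exp (- \<gamma>1) + exp (- \<gamma>2)"
    (is "measure law {\<omega> \<in> space law. ?F \<omega> \<or> ?F1 \<omega>} \<le> _")
proof -
  define D2 where "D2 = {\<omega> \<in> space law. \<not> (dist1 (fst \<omega>) (fst (snd \<omega>)) \<le> d1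
                                         \<and> dist2 (fst \<omega>) (snd (snd \<omega>)) \<le> d2)}"
  define T1 where "T1 = {\<omega> \<in> space law. real M1 * exp \<gamma>1 \<le> Sigma1_integrand (fst \<omega>) (fst (snd \<omega>))}"
  define T2 where "T2 = {\<omega> \<in> space law.
                          real M2 * exp \<gamma>2 \<le> Sigma2_integrand (fst \<omega>) (fst (snd \<omega>)) (snd (snd \<omega>))}"
  have events: "D2 \<in> sets law" "T1 \<in> sets law" "T2 \<in> sets law"
    unfolding D2_def T1_def T2_def sets_law space_law by measurable
  have "{\<omega> \<in> space law. ?F \<omega> \<or> ?F1 \<omega>} \<subseteq> D2 \<union> T1 \<union> T2"
  proof
    fix \<omega> assume "\<omega> \<in> {\<omega> \<in> space law. ?F \<omega> \<or> ?F1 \<omega>}"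
    then have \<omega>: "\<omega> \<in> space law" and "?F \<omega> \<or> ?F1 \<omega>"
      by auto
    show "\<omega> \<in> D2 \<union> T1 \<union> T2"
    proof (cases "\<omega> \<in> D2")
      case False
      then have d: "dist1 (fst \<omega>) (fst (snd \<omega>)) \<le> d1" "dist2 (fst \<omega>) (snd (snd \<omega>)) \<le> d2"
        using \<omega> by (auto simp: D2_def)
      show ?thesis
      proof (cases "?F1 \<omega>")
        case True
        then show ?thesis
          using Sigma1_integrand_ge[OF space_lawD(1,2)[OF \<omega>] d(1) True] \<omega> by (simp add: T1_def)
      next
        case False
        then have "real M2 * exp \<gamma>2 \<le> Sigma2_integrand (fst \<omega>) (fst (snd \<omega>)) (snd (snd \<omega>))"
          using \<open>?F \<omega> \<or> ?F1 \<omega>\<close> by (intro Sigma2_integrand_ge[OF space_lawD(1,2)[OF \<omega>] d]) auto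
        then show ?thesis
          using \<omega> by (simp add: T2_def)
      qed
    qed simp
  qed
  then have "measure law {\<omega> \<in> space law. ?F \<omega> \<or> ?F1 \<omega>} \<le> measure law (D2 \<union> T1 \<union> T2)"
    using events prob_space_law by (intro finite_measure.finite_measure_mono prob_space.finite_measure) auto
  also have "\<dots> \<le> eps2 + exp (- \<gamma>1) + exp (- \<gamma>2)"
    using measure_Un_le[OF sets.Un[OF events(1,2)] events(3)] measure_Un_le[OF events(1,2)]
      assms measure_Sigma1_integrand_ge[of \<gamma>1] measure_Sigma2_integrand_ge[of \<gamma>2]
    unfolding D2_def T1_def T2_def by linarith
  finally show ?thesis .
qed

end

theorem corollary2:
  fixes PX :: "'x measure" and MY1 :: "'y1 measure" and MY2 :: "'y2 measure"
    and dist1 :: "'x \<Rightarrow> 'y1 \<Rightarrow> real" and dist2 :: "'x \<Rightarrow> 'y2 \<Rightarrow> real"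
    and beta1 :: "'x \<Rightarrow> real" and beta2 :: "'x \<Rightarrow> 'y1 \<Rightarrow> real"
    and nu1 lam1 lam2 d1 d2 eps1 eps2 gamma1 gamma2 :: real
    and M1 M2 :: nat
    and E1 :: "'x \<Rightarrow> nat measure" and E2 :: "'x \<times> nat \<Rightarrow> nat measure"
    and G1 :: "nat \<Rightarrow> 'y1 measure" and G2 :: "nat \<times> nat \<Rightarrow> 'y2 measure"
  assumes PX: "prob_space PX"
    and sing_X: "\<And>x. x \<in> space PX \<Longrightarrow> {x} \<in> sets PX"
    and sing_Y1: "\<And>y. y \<in> space MY1 \<Longrightarrow> {y} \<in> sets MY1"
    and sing_Y2: "\<And>y. y \<in> space MY2 \<Longrightarrow> {y} \<in> sets MY2"
    and dist1_meas: "(\<lambda>(x, y). dist1 x y) \<in> borel_measurable (PX \<Otimes>\<^sub>M MY1)"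
    and dist2_meas: "(\<lambda>(x, y). dist2 x y) \<in> borel_measurable (PX \<Otimes>\<^sub>M MY2)"
    and dist1_nonneg: "\<And>x y. x \<in> space PX \<Longrightarrow> y \<in> space MY1 \<Longrightarrow> 0 \<le> dist1 x y"
    and dist2_nonneg: "\<And>x y. x \<in> space PX \<Longrightarrow> y \<in> space MY2 \<Longrightarrow> 0 \<le> dist2 x y"
    and nu1: "0 \<le> nu1" and lam1: "0 \<le> lam1" and lam2: "0 \<le> lam2"
    and beta1_meas: "beta1 \<in> borel_measurable PX"
    and beta1_pos: "\<And>x. x \<in> space PX \<Longrightarrow> 0 < beta1 x"
    and beta2_meas: "(\<lambda>(x, y). beta2 x y) \<in> borel_measurable (PX \<Otimes>\<^sub>M MY1)"
    and beta2_pos: "\<And>x y. x \<in> space PX \<Longrightarrow> y \<in> space MY1 \<Longrightarrow> 0 < beta2 x y"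
    and Sigma2_le: "\<And>y1 y2. y1 \<in> space MY1 \<Longrightarrow> y2 \<in> space MY2 \<Longrightarrow>
                      Sigma2 PX dist1 dist2 beta1 beta2 nu1 lam1 lam2 y1 y2 \<le> 1"
    and Sigma1_le: "\<And>y1. y1 \<in> space MY1 \<Longrightarrow> Sigma1 PX dist1 beta1 beta2 nu1 lam1 y1 \<le> 1"
    and code: "is_code PX MY1 MY2 dist1 dist2 M1 M2 d1 d2 eps1 eps2 E1 E2 G1 G2"
    and gamma1: "0 < gamma1" and gamma2: "0 < gamma2"
  defines "L \<equiv> code_law PX MY1 MY2 E1 E2 G1 G2"
    and "F1 \<equiv> (\<lambda>x y1. ln (beta2 x y1 powr (1 / (1 + nu1)) / beta1 x) - lam1 / (1 + nu1) * d1)"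
    and "F \<equiv> (\<lambda>x. (1 + nu1) * ln (1 / beta1 x) - lam1 * d1 - lam2 * d2 - nu1 * ln (real M1))"
  shows "(eps1 \<ge> measure L {\<omega> \<in> space L. F1 (fst \<omega>) (fst (snd \<omega>)) \<ge> ln (real M1) + gamma1}
                  - exp (- gamma1)) \<and>
         (eps2 \<ge> measure L {\<omega> \<in> space L.
                   F (fst \<omega>) \<ge> ln (real M2) + nu1 * gamma1 + gamma2
                   \<or> F1 (fst \<omega>) (fst (snd \<omega>)) \<ge> ln (real M1) + gamma1}
                  - exp (- gamma1) - exp (- gamma2))"
proof -
  obtain M1_pos: "0 < M1" and M1_le_M2: "M1 \<le> M2"
    and E1: "E1 \<in> PX \<rightarrow>\<^sub>M prob_algebra (count_space {1..M1})"
    and E2: "E2 \<in> PX \<Otimes>\<^sub>M count_space {1..M1} \<rightarrow>\<^sub>M prob_algebra (count_space {1..M2 div M1})"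
    and G1: "G1 \<in> count_space {1..M1} \<rightarrow>\<^sub>M prob_algebra MY1"
    and G2: "G2 \<in> count_space {1..M1} \<Otimes>\<^sub>M count_space {1..M2 div M1} \<rightarrow>\<^sub>M prob_algebra MY2"
    and eps1: "measure L {\<omega> \<in> space L. \<not> dist1 (fst \<omega>) (fst (snd \<omega>)) \<le> d1} \<le> eps1"
    and eps2: "measure L {\<omega> \<in> space L. \<not> (dist1 (fst \<omega>) (fst (snd \<omega>)) \<le> d1
                                     \<and> dist2 (fst \<omega>) (snd (snd \<omega>)) \<le> d2)} \<le> eps2"
    using code unfolding is_code_def L_def Let_def by blast
  interpret C: two_stage_code PX MY1 MY2 dist1 dist2 beta1 beta2 nu1 lam1 lam2 M1 M2 E1 E2 G1 G2
    by (rule two_stage_code.intro[OF PX dist1_meas dist2_meas nu1 lam1 lam2 beta1_meas beta1_pos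
          beta2_meas beta2_pos Sigma2_le Sigma1_le M1_pos M1_le_M2 E1 E2 G1 G2])
  have F1_eq: "F1 = C.F1 d1" and F_eq: "F = C.F d1 d2"
    unfolding F1_def F_def C.F1_def C.F_def by (rule refl)+
  show ?thesis
    using C.first_stage_error_bound[OF eps1[unfolded L_def], of gamma1]
      C.second_stage_error_bound[OF eps2[unfolded L_def], of gamma1 gamma2]
    unfolding L_def F1_eq F_eq by linarith
qed

end
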